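(* In the standing setting, let $(\psi,\alpha)\in\mathcal{A}\times\mathcal{B}$ with lifting $\psi^\uparrow$. Then $(G,r)$, $(G,r')$, $(G,\widetilde r)$, $(G,\widetilde r')$ are set-theoretic non-degenerate solutions of the Yang--Baxter equation, where for $g,h\in G$: $$r(g,h)=\Big(\psi^\uparrow(g)\,h\,\psi^\uparrow(g)^{-1}\,\alpha(g,h),\ \psi^\uparrow(h)^{-1}\psi^\uparrow(g)\,h^{-1}\,\psi^\uparrow(g)^{-1}\,g\,\psi^\uparrow(g)\,h\,\psi^\uparrow(g)^{-1}\psi^\uparrow(h)\,\alpha(h^{-1},g)\Big);$$ $$r'(g,h)=\Big(g\,\psi^\uparrow(g)\,h\,\psi^\uparrow(g)^{-1}\,g^{-1}\,\alpha(g,h),\ \psi^\uparrow(h)^{-1}\,g\,\psi^\uparrow(h)\,\alpha(h^{-1},g)\Big);$$ $$\widetilde r(g,h)=\Big(\psi^\uparrow(g)^{-1}\,h\,\psi^\uparrow(g)\,\alpha(g^{-1},h),\ \psi^\uparrow(g)^{-1}\,h^{-1}\,\psi^\uparrow(g)\,g\,h\,\alpha(g,h)\Big);$$ $$\widetilde r'(g,h)=\Big(g\,h\,\psi^\uparrow(h)\,g^{-1}\,\psi^\uparrow(h)^{-1}\,\alpha(h,g^{-1}),\ \psi^\uparrow(h)\,g\,\psi^\uparrow(h)^{-1}\,\alpha(h,g)\Big).$$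
   Context: Standing setting: $(G,\cdot)$ is a group, $K$ is a subgroup of $G$ contained in the centre $Z(G)$, and $A$ is a subgroup with $K\le A\le G$ and $A/K$ abelian. Let $\mathcal{A}=\{\psi\in\operatorname{End}(G/K):\psi(G/K)\le A/K\}$. A lifting of $\psi\in\mathcal{A}$ is any set map $\psi^{\uparrow}:G\to A$ with $\psi^{\uparrow}(g)K=\psi(gK)$ for all $g\in G$. Let $\mathcal{B}$ be the set of maps $\alpha:G\times G\to K$ that are bilinear, i.e. $\alpha(gh,k)=\alpha(g,k)\alpha(h,k)$ and $\alpha(g,hk)=\alpha(g,h)\alpha(g,k)$, and satisfy $\alpha(k,g)=\alpha(g,k)=1$ for all $k\in K$, $g\in G$. A set-theoretic solution of the Yang--Baxter equation is a pair $(X,r)$ with $X\neq\emptyset$ and $r:X\times X\to X\times X$, $r(x,y)=(\sigma_x(y),\tau_y(x))$, a bijection satisfying $(r\times\mathrm{id}_X)(\mathrm{id}_X\times r)(r\times\mathrm{id}_X)=(\mathrm{id}_X\times r)(r\times\mathrm{id}_X)(\mathrm{id}_X\times r)$; it is non-degenerate if all $\sigma_x$ and $\tau_x$ are bijective. *)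

theory Defs
  imports "HOL-Algebra.Algebra"
begin

definition group_centre :: "('a, 'b) monoid_scheme \<Rightarrow> 'a set" where
  "group_centre G = {z \<in> carrier G. \<forall>g \<in> carrier G. z \<otimes>\<^bsub>G\<^esub> g = g \<otimes>\<^bsub>G\<^esub> z}"

text \<open>Set-theoretic solutions of the Yang--Baxter equation on a set S.
  For r(x,y) = (sigma_x(y), tau_y(x)) we have sigma_x(y) = fst (r (x,y)), tau_y(x) = snd (r (x,y)).\<close>
definition r12 :: "('a \<times> 'a \<Rightarrow> 'a \<times> 'a) \<Rightarrow> 'a \<times> 'a \<times> 'a \<Rightarrow> 'a \<times> 'a \<times> 'a" where
  "r12 r = (\<lambda>(x, y, z). (fst (r (x, y)), snd (r (x, y)), z))"

definition r23 :: "('a \<times> 'a \<Rightarrow> 'a \<times> 'a) \<Rightarrow> 'a \<times> 'a \<times> 'a \<Rightarrow> 'a \<times> 'a \<times> 'a" where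
  "r23 r = (\<lambda>(x, y, z). (x, fst (r (y, z)), snd (r (y, z))))"

definition YBE_solution :: "'a set \<Rightarrow> ('a \<times> 'a \<Rightarrow> 'a \<times> 'a) \<Rightarrow> bool" where
  "YBE_solution S r \<longleftrightarrow> S \<noteq> {} \<and> bij_betw r (S \<times> S) (S \<times> S) \<and>
     (\<forall>x \<in> S. \<forall>y \<in> S. \<forall>z \<in> S.
        r12 r (r23 r (r12 r (x, y, z))) = r23 r (r12 r (r23 r (x, y, z))))"

definition nondegenerate :: "'a set \<Rightarrow> ('a \<times> 'a \<Rightarrow> 'a \<times> 'a) \<Rightarrow> bool" where
  "nondegenerate S r \<longleftrightarrow>
     (\<forall>x \<in> S. bij_betw (\<lambda>y. fst (r (x, y))) S S) \<and>
     (\<forall>y \<in> S. bij_betw (\<lambda>x. snd (r (x, y))) S S)"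

definition nondeg_YBE_solution :: "'a set \<Rightarrow> ('a \<times> 'a \<Rightarrow> 'a \<times> 'a) \<Rightarrow> bool" where
  "nondeg_YBE_solution S r \<longleftrightarrow> YBE_solution S r \<and> nondegenerate S r"

definition bilin_maps :: "('a, 'b) monoid_scheme \<Rightarrow> 'a set \<Rightarrow> ('a \<Rightarrow> 'a \<Rightarrow> 'a) set" where
  "bilin_maps G K = {\<alpha>. (\<forall>g \<in> carrier G. \<forall>h \<in> carrier G. \<alpha> g h \<in> K) \<and>
     (\<forall>g \<in> carrier G. \<forall>h \<in> carrier G. \<forall>k \<in> carrier G.
        \<alpha> (g \<otimes>\<^bsub>G\<^esub> h) k = \<alpha> g k \<otimes>\<^bsub>G\<^esub> \<alpha> h k \<and>
        \<alpha> g (h \<otimes>\<^bsub>G\<^esub> k) = \<alpha> g h \<otimes>\<^bsub>G\<^esub> \<alpha> g k) \<and>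
     (\<forall>k \<in> K. \<forall>g \<in> carrier G. \<alpha> k g = \<one>\<^bsub>G\<^esub> \<and> \<alpha> g k = \<one>\<^bsub>G\<^esub>)}"

definition endo_into :: "('a, 'b) monoid_scheme \<Rightarrow> 'a set \<Rightarrow> 'a set \<Rightarrow> ('a set \<Rightarrow> 'a set) set" where
  "endo_into G K A = {\<psi>. \<psi> \<in> hom (G Mod K) (G Mod K) \<and>
      \<psi> ` carrier (G Mod K) \<subseteq> (\<lambda>a. K #>\<^bsub>G\<^esub> a) ` A}"

definition is_lifting :: "('a, 'b) monoid_scheme \<Rightarrow> 'a set \<Rightarrow> 'a set \<Rightarrow> ('a set \<Rightarrow> 'a set) \<Rightarrow> ('a \<Rightarrow> 'a) \<Rightarrow> bool" where
  "is_lifting G K A \<psi> \<psi>u \<longleftrightarrow> (\<forall>g \<in> carrier G. \<psi>u g \<in> A \<and> K #>\<^bsub>G\<^esub> \<psi>u g = \<psi> (K #>\<^bsub>G\<^esub> g))"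

end

theory Submission
  imports Defs
begin

text \<open>
  Write \<open>\<lambda>\<^sub>g\<close> for conjugation by \<open>\<psi>\<^sup>\<up>(g)\<close>. Since \<open>\<psi>\<close> is an endomorphism of \<open>G/K\<close> with image
  in the abelian group \<open>A/K\<close> and \<open>K\<close> is central, \<open>g \<mapsto> \<lambda>\<^sub>g\<close> is a homomorphism into a commutative
  group of inner automorphisms which is trivial on \<open>K\<close> and constant on conjugacy classes. Without
  the factors \<open>\<alpha>\<close>, the four maps are built from \<open>\<lambda>\<close>, so their braid relations become identities
  between words in the commuting automorphisms \<open>\<lambda>\<^sub>x, \<lambda>\<^sub>y, \<lambda>\<^sub>z\<close>; moreover \<open>r\<close>, \<open>r'\<close> and
  \<open>r\<^sup>~\<close>, \<open>r\<^sup>~'\<close> are pairs of mutually inverse maps. The factors \<open>\<alpha>(\<cdot>,\<cdot>)\<close> lie in the central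
  subgroup \<open>K\<close> and do not change when their arguments are conjugated or translated by \<open>K\<close>,
  while the four maps are \<open>K\<close>-equivariant; multiplying the components by such factors preserves
  the braid relations, bijectivity and non-degeneracy.
\<close>

section \<open>Solutions given by their components\<close>

definition braid_relations :: "'a set \<Rightarrow> ('a \<Rightarrow> 'a \<Rightarrow> 'a) \<Rightarrow> ('a \<Rightarrow> 'a \<Rightarrow> 'a) \<Rightarrow> bool" where
  "braid_relations S \<sigma> \<tau> \<longleftrightarrow> (\<forall>x\<in>S. \<forall>y\<in>S. \<forall>z\<in>S.
     \<sigma> (\<sigma> x y) (\<sigma> (\<tau> y x) z) = \<sigma> x (\<sigma> y z) \<and>
     \<tau> (\<sigma> (\<tau> y x) z) (\<sigma> x y) = \<sigma> (\<tau> (\<sigma> y z) x) (\<tau> z y) \<and>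
     \<tau> z (\<tau> y x) = \<tau> (\<tau> z y) (\<tau> (\<sigma> y z) x))"

lemma braid_relationsI:
  assumes "\<And>x y z. x \<in> S \<Longrightarrow> y \<in> S \<Longrightarrow> z \<in> S \<Longrightarrow>
     \<sigma> (\<sigma> x y) (\<sigma> (\<tau> y x) z) = \<sigma> x (\<sigma> y z) \<and>
     \<tau> (\<sigma> (\<tau> y x) z) (\<sigma> x y) = \<sigma> (\<tau> (\<sigma> y z) x) (\<tau> z y) \<and>
     \<tau> z (\<tau> y x) = \<tau> (\<tau> z y) (\<tau> (\<sigma> y z) x)"
  shows "braid_relations S \<sigma> \<tau>"
  using assms by (simp add: braid_relations_def)

lemma braid_relationsD:
  assumes "braid_relations S \<sigma> \<tau>" "x \<in> S" "y \<in> S" "z \<in> S"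
  shows "\<sigma> (\<sigma> x y) (\<sigma> (\<tau> y x) z) = \<sigma> x (\<sigma> y z)"
    and "\<tau> (\<sigma> (\<tau> y x) z) (\<sigma> x y) = \<sigma> (\<tau> (\<sigma> y z) x) (\<tau> z y)"
    and "\<tau> z (\<tau> y x) = \<tau> (\<tau> z y) (\<tau> (\<sigma> y z) x)"
  using assms by (simp_all add: braid_relations_def)

lemma YBE_solution_iff_braid_relations:
  "YBE_solution S (\<lambda>(x, y). (\<sigma> x y, \<tau> y x)) \<longleftrightarrow>
     S \<noteq> {} \<and> bij_betw (\<lambda>(x, y). (\<sigma> x y, \<tau> y x)) (S \<times> S) (S \<times> S) \<and> braid_relations S \<sigma> \<tau>"
  by (auto simp: YBE_solution_def braid_relations_def r12_def r23_def)

lemma nondegenerate_iff_bij_betw: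
  "nondegenerate S (\<lambda>(x, y). (\<sigma> x y, \<tau> y x)) \<longleftrightarrow>
     (\<forall>x\<in>S. bij_betw (\<sigma> x) S S) \<and> (\<forall>y\<in>S. bij_betw (\<tau> y) S S)"
  by (simp add: nondegenerate_def)

lemma bij_betw_of_inverse_pair_maps:
  assumes "\<And>x y. x \<in> S \<Longrightarrow> y \<in> S \<Longrightarrow> \<sigma> x y \<in> S \<and> \<tau> y x \<in> S \<and> \<sigma>' x y \<in> S \<and> \<tau>' y x \<in> S"
    and "\<And>x y. x \<in> S \<Longrightarrow> y \<in> S \<Longrightarrow> \<sigma>' (\<sigma> x y) (\<tau> y x) = x \<and> \<tau>' (\<tau> y x) (\<sigma> x y) = y"
    and "\<And>x y. x \<in> S \<Longrightarrow> y \<in> S \<Longrightarrow> \<sigma> (\<sigma>' x y) (\<tau>' y x) = x \<and> \<tau> (\<tau>' y x) (\<sigma>' x y) = y"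
  shows "bij_betw (\<lambda>(x, y). (\<sigma> x y, \<tau> y x)) (S \<times> S) (S \<times> S)"
  by (rule bij_betw_byWitness[where f'="\<lambda>(x, y). (\<sigma>' x y, \<tau>' y x)"]) (use assms in auto)

section \<open>Conjugation\<close>

context group
begin

definition conjugate :: "'a \<Rightarrow> 'a \<Rightarrow> 'a" where
  "conjugate p u = p \<otimes> u \<otimes> inv p"

lemma mult_inv_cancel_left [simp]: "x \<in> carrier G \<Longrightarrow> y \<in> carrier G \<Longrightarrow> x \<otimes> (inv x \<otimes> y) = y"
  by (simp flip: m_assoc)

lemma inv_mult_cancel_left [simp]: "x \<in> carrier G \<Longrightarrow> y \<in> carrier G \<Longrightarrow> inv x \<otimes> (x \<otimes> y) = y"
  by (simp flip: m_assoc)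

lemma conjugate_closed [simp]: "p \<in> carrier G \<Longrightarrow> u \<in> carrier G \<Longrightarrow> conjugate p u \<in> carrier G"
  by (simp add: conjugate_def)

lemma conjugate_conjugate:
  "p \<in> carrier G \<Longrightarrow> q \<in> carrier G \<Longrightarrow> u \<in> carrier G \<Longrightarrow> conjugate p (conjugate q u) = conjugate (p \<otimes> q) u"
  by (simp add: conjugate_def m_assoc inv_mult_group)

lemma conjugate_mult [simp]:
  "p \<in> carrier G \<Longrightarrow> a \<in> carrier G \<Longrightarrow> b \<in> carrier G \<Longrightarrow> conjugate p (a \<otimes> b) = conjugate p a \<otimes> conjugate p b"
  by (simp add: conjugate_def m_assoc)

lemma conjugate_inv [simp]: "p \<in> carrier G \<Longrightarrow> a \<in> carrier G \<Longrightarrow> conjugate p (inv a) = inv (conjugate p a)"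
  by (simp add: conjugate_def m_assoc inv_mult_group)

lemma conjugate_one [simp]: "u \<in> carrier G \<Longrightarrow> conjugate \<one> u = u"
  by (simp add: conjugate_def)

lemma conjugate_inv_conjugate [simp]:
  "p \<in> carrier G \<Longrightarrow> u \<in> carrier G \<Longrightarrow> conjugate (inv p) (conjugate p u) = u"
  by (simp add: conjugate_def m_assoc)

lemma conjugate_conjugate_inv [simp]:
  "p \<in> carrier G \<Longrightarrow> u \<in> carrier G \<Longrightarrow> conjugate p (conjugate (inv p) u) = u"
  by (simp add: conjugate_def m_assoc)

lemma bij_betw_conjugate: "p \<in> carrier G \<Longrightarrow> bij_betw (conjugate p) (carrier G) (carrier G)"
  by (rule bij_betw_byWitness[where f'="conjugate (inv p)"]) auto

lemma bij_betw_conjugate_cong: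
  assumes "p \<in> carrier G" "\<And>h. h \<in> carrier G \<Longrightarrow> f h = conjugate p h"
  shows "bij_betw f (carrier G) (carrier G)"
  using bij_betw_cong[of "carrier G" f "conjugate p"] bij_betw_conjugate assms by blast

definition conjugations_commute :: "'a \<Rightarrow> 'a \<Rightarrow> bool" where
  "conjugations_commute p q \<longleftrightarrow> (\<forall>u\<in>carrier G. conjugate p (conjugate q u) = conjugate q (conjugate p u))"

lemma conjugations_commute_sym: "conjugations_commute p q \<Longrightarrow> conjugations_commute q p"
  by (simp add: conjugations_commute_def)

lemma conjugations_commute_one: "q \<in> carrier G \<Longrightarrow> conjugations_commute \<one> q"
  by (simp add: conjugations_commute_def)

lemma conjugations_commute_inv:
  assumes "p \<in> carrier G" "q \<in> carrier G" "conjugations_commute p q"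
  shows "conjugations_commute (inv p) q"
  unfolding conjugations_commute_def
proof
  fix u assume u: "u \<in> carrier G"
  define w where "w = conjugate (inv p) u"
  have w: "w \<in> carrier G" using assms u by (simp add: w_def)
  have "conjugate p (conjugate q w) = conjugate q (conjugate p w)"
    using assms(3) w by (simp add: conjugations_commute_def)
  also have "\<dots> = conjugate q u"
    using assms u by (simp add: w_def)
  finally have "conjugate p (conjugate q w) = conjugate q u" .
  then have "conjugate q w = conjugate (inv p) (conjugate q u)"
    using assms w by (metis conjugate_closed conjugate_inv_conjugate)
  then show "conjugate (inv p) (conjugate q u) = conjugate q (conjugate (inv p) u)"
    by (simp add: w_def)
qed

lemma conjugations_commute_mult:
  assumes "p \<in> carrier G" "p' \<in> carrier G" "q \<in> carrier G"
    and "conjugations_commute p q" "conjugations_commute p' q"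
  shows "conjugations_commute (p \<otimes> p') q"
  unfolding conjugations_commute_def
proof
  fix u assume u: "u \<in> carrier G"
  have "conjugate (p \<otimes> p') (conjugate q u) = conjugate p (conjugate p' (conjugate q u))"
    using assms u by (simp add: conjugate_conjugate m_assoc)
  also have "\<dots> = conjugate p (conjugate q (conjugate p' u))"
    using assms(5) u by (simp add: conjugations_commute_def)
  also have "\<dots> = conjugate q (conjugate p (conjugate p' u))"
    using assms(2,4) u by (simp add: conjugations_commute_def)
  also have "\<dots> = conjugate q (conjugate (p \<otimes> p') u)"
    using assms u by (simp add: conjugate_conjugate m_assoc)
  finally show "conjugate (p \<otimes> p') (conjugate q u) = conjugate q (conjugate (p \<otimes> p') u)" .
qed

lemma conjugations_commute_int_pow:
  assumes "p \<in> carrier G" "q \<in> carrier G" "conjugations_commute p q"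
  shows "conjugations_commute (p [^] (i::int)) q"
proof -
  have nat_pow: "conjugations_commute (p [^] (n::nat)) q" for n
    by (induction n) (use assms in \<open>simp_all add: conjugations_commute_one conjugations_commute_mult\<close>)
  have "conjugations_commute (inv (p [^] nat (- i))) q"
    using assms(1,2) by (intro conjugations_commute_inv nat_pow) simp_all
  with nat_pow show ?thesis
    by (cases "i < 0") (simp_all only: int_pow_def2 if_True if_False)
qed

end

section \<open>Twisting by a central subgroup\<close>

locale central_subgroup = group G for G (structure) +
  fixes K :: "'a set"
  assumes subgroup_K: "subgroup K G"
    and K_central: "\<lbrakk>k \<in> K; g \<in> carrier G\<rbrakk> \<Longrightarrow> k \<otimes> g = g \<otimes> k"
begin

lemma K_carrier [simp]: "k \<in> K \<Longrightarrow> k \<in> carrier G"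
  using subgroup.mem_carrier[OF subgroup_K] .

lemma K_mult [simp]: "k \<in> K \<Longrightarrow> k' \<in> K \<Longrightarrow> k \<otimes> k' \<in> K"
  using subgroup.m_closed[OF subgroup_K] .

lemma K_inv [simp]: "k \<in> K \<Longrightarrow> inv k \<in> K"
  using subgroup.m_inv_closed[OF subgroup_K] .

lemma K_one [simp]: "\<one> \<in> K"
  using subgroup.one_closed[OF subgroup_K] .

lemma K_mult_comm: "k \<in> K \<Longrightarrow> k' \<in> K \<Longrightarrow> k \<otimes> k' = k' \<otimes> k"
  by (simp add: K_central)

lemma K_mult_left_comm: "k \<in> K \<Longrightarrow> k' \<in> K \<Longrightarrow> r \<in> carrier G \<Longrightarrow> k \<otimes> (k' \<otimes> r) = k' \<otimes> (k \<otimes> r)"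
  by (simp add: K_mult_comm flip: m_assoc)

lemma K_central_cancel:
  assumes "k \<in> K" "u \<in> carrier G" "r \<in> carrier G"
  shows "k \<otimes> (u \<otimes> (inv k \<otimes> r)) = u \<otimes> r"
proof -
  have "k \<otimes> (u \<otimes> (inv k \<otimes> r)) = k \<otimes> (inv k \<otimes> u) \<otimes> r"
    using assms by (simp add: K_central[of "inv k" u] m_assoc)
  with assms show ?thesis by (simp flip: m_assoc)
qed

lemma K_conjugate_cancel: "k \<in> K \<Longrightarrow> u \<in> carrier G \<Longrightarrow> k \<otimes> (u \<otimes> inv k) = u"
  using K_central_cancel[of k u \<one>] by simp

lemma conjugate_K: "p \<in> carrier G \<Longrightarrow> k \<in> K \<Longrightarrow> conjugate p k = k"
proof -
  assume "p \<in> carrier G" "k \<in> K"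
  then have "conjugate p k = k \<otimes> p \<otimes> inv p" by (simp add: conjugate_def K_central[of k p])
  with \<open>p \<in> carrier G\<close> \<open>k \<in> K\<close> show ?thesis by (simp add: m_assoc)
qed

lemma conjugate_mult_K:
  assumes "p \<in> carrier G" "k \<in> K" "u \<in> carrier G"
  shows "conjugate (p \<otimes> k) u = conjugate p u"
  using assms by (simp add: conjugate_def m_assoc inv_mult_group K_central_cancel)

lemma conjugate_eq_mod_K:
  assumes "x \<in> carrier G" "y \<in> carrier G" "inv y \<otimes> x \<in> K" "u \<in> carrier G"
  shows "conjugate x u = conjugate y u"
proof -
  have "x = y \<otimes> (inv y \<otimes> x)"
    using assms by simp
  then show ?thesis
    using assms conjugate_mult_K[of y "inv y \<otimes> x" u] by simp
qed

definition K_equivariant :: "('a \<Rightarrow> 'a \<Rightarrow> 'a) \<Rightarrow> ('a \<Rightarrow> 'a \<Rightarrow> 'a) \<Rightarrow> bool" where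
  "K_equivariant \<sigma> \<tau> \<longleftrightarrow> (\<forall>u\<in>carrier G. \<forall>v\<in>carrier G. \<forall>k\<in>K.
     \<sigma> (u \<otimes> k) v = \<sigma> u v \<and> \<sigma> u (v \<otimes> k) = \<sigma> u v \<otimes> k \<and>
     \<tau> (v \<otimes> k) u = \<tau> v u \<and> \<tau> v (u \<otimes> k) = \<tau> v u \<otimes> k)"

lemma K_equivariantD:
  assumes "K_equivariant \<sigma> \<tau>" "u \<in> carrier G" "v \<in> carrier G" "k \<in> K"
  shows "\<sigma> (u \<otimes> k) v = \<sigma> u v" "\<sigma> u (v \<otimes> k) = \<sigma> u v \<otimes> k"
    and "\<tau> (v \<otimes> k) u = \<tau> v u" "\<tau> v (u \<otimes> k) = \<tau> v u \<otimes> k"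
  using assms by (simp_all add: K_equivariant_def)

definition twist_compatible ::
    "('a \<Rightarrow> 'a \<Rightarrow> 'a) \<Rightarrow> ('a \<Rightarrow> 'a \<Rightarrow> 'a) \<Rightarrow> ('a \<Rightarrow> 'a \<Rightarrow> 'a) \<Rightarrow> bool" where
  "twist_compatible \<sigma> \<tau> \<beta> \<longleftrightarrow> (\<forall>u\<in>carrier G. \<forall>v\<in>carrier G. \<beta> u v \<in> K \<and>
     (\<forall>k\<in>K. \<beta> (u \<otimes> k) v = \<beta> u v \<and> \<beta> u (v \<otimes> k) = \<beta> u v) \<and>
     (\<forall>w\<in>carrier G. \<beta> (\<sigma> u v) w = \<beta> v w \<and> \<beta> w (\<sigma> u v) = \<beta> w v \<and>
        \<beta> (\<tau> v u) w = \<beta> u w \<and> \<beta> w (\<tau> v u) = \<beta> w u))"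

lemma twist_compatibleD:
  assumes "twist_compatible \<sigma> \<tau> \<beta>" "u \<in> carrier G" "v \<in> carrier G"
  shows "\<beta> u v \<in> K"
    and "k \<in> K \<Longrightarrow> \<beta> (u \<otimes> k) v = \<beta> u v" "k \<in> K \<Longrightarrow> \<beta> u (v \<otimes> k) = \<beta> u v"
    and "w \<in> carrier G \<Longrightarrow> \<beta> (\<sigma> u v) w = \<beta> v w" "w \<in> carrier G \<Longrightarrow> \<beta> w (\<sigma> u v) = \<beta> w v"
    and "w \<in> carrier G \<Longrightarrow> \<beta> (\<tau> v u) w = \<beta> u w" "w \<in> carrier G \<Longrightarrow> \<beta> w (\<tau> v u) = \<beta> w u"
  using assms by (simp_all add: twist_compatible_def)

lemma bij_betw_mult_K_valued:
  assumes f: "bij_betw f (carrier G) (carrier G)"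
    and b_K: "\<And>y. y \<in> carrier G \<Longrightarrow> b y \<in> K"
    and c_f: "\<And>y. y \<in> carrier G \<Longrightarrow> c (f y) = b y"
    and c_K: "\<And>w k. w \<in> carrier G \<Longrightarrow> k \<in> K \<Longrightarrow> c (w \<otimes> k) = c w"
  shows "bij_betw (\<lambda>y. f y \<otimes> b y) (carrier G) (carrier G)"
proof -
  have f_closed: "f y \<in> carrier G" if "y \<in> carrier G" for y
    using f that by (rule bij_betw_apply)
  have c_closed: "c t \<in> K" if "t \<in> carrier G" for t
  proof -
    obtain y where "y \<in> carrier G" "t = f y"
      using f \<open>t \<in> carrier G\<close> by (auto simp: bij_betw_def)
    then show ?thesis by (simp add: c_f b_K)
  qed
  let ?h = "\<lambda>t. inv_into (carrier G) f (t \<otimes> inv (c t))"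
  show ?thesis
  proof (rule bij_betw_byWitness[where f'="?h"])
    show "\<forall>y\<in>carrier G. ?h (f y \<otimes> b y) = y"
      using f by (simp add: f_closed b_K c_f c_K m_assoc bij_betw_inv_into_left)
    show "\<forall>t\<in>carrier G. f (?h t) \<otimes> b (?h t) = t"
    proof
      fix t assume t: "t \<in> carrier G"
      then have ht: "?h t \<in> carrier G" and "f (?h t) = t \<otimes> inv (c t)"
        using f c_closed by (simp_all add: bij_betw_inv_into_right inv_into_into bij_betw_def)
      then show "f (?h t) \<otimes> b (?h t) = t"
        using t c_closed by (simp flip: c_f add: c_K m_assoc)
    qed
    show "(\<lambda>y. f y \<otimes> b y) ` carrier G \<subseteq> carrier G"
      using f_closed b_K by auto
    show "?h ` carrier G \<subseteq> carrier G"
      using f c_closed by (auto intro: inv_into_into simp: bij_betw_def)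
  qed
qed

context
  fixes \<sigma> \<tau> \<beta> \<gamma> :: "'a \<Rightarrow> 'a \<Rightarrow> 'a"
  assumes closed: "\<And>u v. u \<in> carrier G \<Longrightarrow> v \<in> carrier G \<Longrightarrow> \<sigma> u v \<in> carrier G \<and> \<tau> v u \<in> carrier G"
    and equivariant: "K_equivariant \<sigma> \<tau>"
    and \<beta>: "twist_compatible \<sigma> \<tau> \<beta>" and \<gamma>: "twist_compatible \<sigma> \<tau> \<gamma>"
begin

lemma braid_relations_twist:
  assumes "braid_relations (carrier G) \<sigma> \<tau>"
  shows "braid_relations (carrier G) (\<lambda>u v. \<sigma> u v \<otimes> \<beta> u v) (\<lambda>v u. \<tau> v u \<otimes> \<gamma> u v)"
  apply (rule braid_relationsI)
  subgoal for x y z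
    using braid_relationsD[OF assms, of x y z] closed
    by (simp add: K_equivariantD[OF equivariant] twist_compatibleD[OF \<beta>] twist_compatibleD[OF \<gamma>]
        m_assoc K_mult_comm K_mult_left_comm)
  done

lemma bij_betw_twist:
  assumes bij: "bij_betw (\<lambda>(u, v). (\<sigma> u v, \<tau> v u)) (carrier G \<times> carrier G) (carrier G \<times> carrier G)"
  shows "bij_betw (\<lambda>(u, v). (\<sigma> u v \<otimes> \<beta> u v, \<tau> v u \<otimes> \<gamma> u v))
           (carrier G \<times> carrier G) (carrier G \<times> carrier G)"
proof -
  note [simp] = twist_compatibleD[OF \<beta>] twist_compatibleD[OF \<gamma>]
  define T where "T = (\<lambda>(a, b). (a \<otimes> \<beta> b a, b \<otimes> \<gamma> b a))"
  have "bij_betw T (carrier G \<times> carrier G) (carrier G \<times> carrier G)"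
    by (rule bij_betw_byWitness[where f'="\<lambda>(a, b). (a \<otimes> inv (\<beta> b a), b \<otimes> inv (\<gamma> b a))"])
      (auto simp: T_def m_assoc)
  with bij have "bij_betw (T \<circ> (\<lambda>(u, v). (\<sigma> u v, \<tau> v u))) (carrier G \<times> carrier G) (carrier G \<times> carrier G)"
    by (rule bij_betw_trans)
  moreover have "(T \<circ> (\<lambda>(u, v). (\<sigma> u v, \<tau> v u))) p = (\<lambda>(u, v). (\<sigma> u v \<otimes> \<beta> u v, \<tau> v u \<otimes> \<gamma> u v)) p"
    if "p \<in> carrier G \<times> carrier G" for p
    using that closed by (auto simp: T_def)
  ultimately show ?thesis
    using bij_betw_cong by blast
qed

lemma nondegenerate_twist:
  assumes "nondegenerate (carrier G) (\<lambda>(u, v). (\<sigma> u v, \<tau> v u))"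
  shows "nondegenerate (carrier G) (\<lambda>(u, v). (\<sigma> u v \<otimes> \<beta> u v, \<tau> v u \<otimes> \<gamma> u v))"
proof -
  note [simp] = twist_compatibleD[OF \<beta>] twist_compatibleD[OF \<gamma>]
  have "bij_betw (\<lambda>v. \<sigma> u v \<otimes> \<beta> u v) (carrier G) (carrier G)" if "u \<in> carrier G" for u
    by (rule bij_betw_mult_K_valued[where c="\<beta> u"])
      (use that assms closed in \<open>simp_all add: nondegenerate_def\<close>)
  moreover have "bij_betw (\<lambda>u. \<tau> v u \<otimes> \<gamma> u v) (carrier G) (carrier G)" if "v \<in> carrier G" for v
    by (rule bij_betw_mult_K_valued[where c="\<lambda>w. \<gamma> w v"])
      (use that assms closed in \<open>simp_all add: nondegenerate_def\<close>)
  ultimately show ?thesis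
    by (simp add: nondegenerate_def)
qed

end

lemma nondeg_YBE_solution_twist:
  assumes solution: "nondeg_YBE_solution (carrier G) (\<lambda>(u, v). (\<sigma> u v, \<tau> v u))"
    and equivariant: "K_equivariant \<sigma> \<tau>"
    and \<beta>: "twist_compatible \<sigma> \<tau> \<beta>" and \<gamma>: "twist_compatible \<sigma> \<tau> \<gamma>"
  shows "nondeg_YBE_solution (carrier G) (\<lambda>(u, v). (\<sigma> u v \<otimes> \<beta> u v, \<tau> v u \<otimes> \<gamma> u v))"
proof -
  from solution have "carrier G \<noteq> {}"
    and bij: "bij_betw (\<lambda>(u, v). (\<sigma> u v, \<tau> v u)) (carrier G \<times> carrier G) (carrier G \<times> carrier G)"
    and braid: "braid_relations (carrier G) \<sigma> \<tau>"
    and nondeg: "nondegenerate (carrier G) (\<lambda>(u, v). (\<sigma> u v, \<tau> v u))"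
    by (simp_all add: nondeg_YBE_solution_def YBE_solution_iff_braid_relations)
  have closed: "\<sigma> u v \<in> carrier G \<and> \<tau> v u \<in> carrier G" if "u \<in> carrier G" "v \<in> carrier G" for u v
    using bij_betw_apply[OF bij, of "(u, v)"] that by simp
  note twist = closed equivariant \<beta> \<gamma>
  show ?thesis
    unfolding nondeg_YBE_solution_def
      YBE_solution_iff_braid_relations[of _ "\<lambda>u v. \<sigma> u v \<otimes> \<beta> u v" "\<lambda>v u. \<tau> v u \<otimes> \<gamma> u v"]
    using \<open>carrier G \<noteq> {}\<close> bij_betw_twist[OF twist bij] braid_relations_twist[OF twist braid]
      nondegenerate_twist[OF twist nondeg]
    by simp
qed

context
  fixes \<alpha>
  assumes \<alpha>: "\<alpha> \<in> bilin_maps G K"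
begin

lemma bilin_in_K [simp]: "a \<in> carrier G \<Longrightarrow> b \<in> carrier G \<Longrightarrow> \<alpha> a b \<in> K"
  using \<alpha> unfolding bilin_maps_def by blast

lemma bilin_mult_left [simp]:
  "a \<in> carrier G \<Longrightarrow> b \<in> carrier G \<Longrightarrow> w \<in> carrier G \<Longrightarrow> \<alpha> (a \<otimes> b) w = \<alpha> a w \<otimes> \<alpha> b w"
  using \<alpha> unfolding bilin_maps_def by blast

lemma bilin_mult_right [simp]:
  "a \<in> carrier G \<Longrightarrow> b \<in> carrier G \<Longrightarrow> w \<in> carrier G \<Longrightarrow> \<alpha> w (a \<otimes> b) = \<alpha> w a \<otimes> \<alpha> w b"
  using \<alpha> unfolding bilin_maps_def by blast

lemma bilin_K_left [simp]: "k \<in> K \<Longrightarrow> w \<in> carrier G \<Longrightarrow> \<alpha> k w = \<one>"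
  using \<alpha> unfolding bilin_maps_def by blast

lemma bilin_K_right [simp]: "k \<in> K \<Longrightarrow> w \<in> carrier G \<Longrightarrow> \<alpha> w k = \<one>"
  using \<alpha> unfolding bilin_maps_def by blast

lemma bilin_inv_left [simp]:
  assumes "a \<in> carrier G" "w \<in> carrier G"
  shows "\<alpha> (inv a) w = inv (\<alpha> a w)"
proof -
  have "\<alpha> (inv a) w \<otimes> \<alpha> a w = \<alpha> (inv a \<otimes> a) w"
    using assms by (simp only: bilin_mult_left inv_closed)
  also have "\<dots> = \<one>"
    using assms by simp
  finally show ?thesis
    using assms inv_equality[of "\<alpha> (inv a) w" "\<alpha> a w"] by simp
qed

lemma bilin_inv_right [simp]:
  assumes "a \<in> carrier G" "w \<in> carrier G"
  shows "\<alpha> w (inv a) = inv (\<alpha> w a)"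
proof -
  have "\<alpha> w (inv a) \<otimes> \<alpha> w a = \<alpha> w (inv a \<otimes> a)"
    using assms by (simp only: bilin_mult_right inv_closed)
  also have "\<dots> = \<one>"
    using assms by simp
  finally show ?thesis
    using assms inv_equality[of "\<alpha> w (inv a)" "\<alpha> w a"] by simp
qed

lemma bilin_conjugate_left [simp]:
  "p \<in> carrier G \<Longrightarrow> a \<in> carrier G \<Longrightarrow> w \<in> carrier G \<Longrightarrow> \<alpha> (conjugate p a) w = \<alpha> a w"
  by (simp add: conjugate_def m_assoc K_conjugate_cancel)

lemma bilin_conjugate_right [simp]:
  "p \<in> carrier G \<Longrightarrow> a \<in> carrier G \<Longrightarrow> w \<in> carrier G \<Longrightarrow> \<alpha> w (conjugate p a) = \<alpha> w a"
  by (simp add: conjugate_def m_assoc K_conjugate_cancel)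

end

definition bilin_invariant :: "('a \<Rightarrow> 'a \<Rightarrow> 'a) \<Rightarrow> bool" where
  "bilin_invariant f \<longleftrightarrow> (\<forall>\<alpha>\<in>bilin_maps G K. \<forall>x\<in>carrier G. \<forall>y\<in>carrier G. \<forall>w\<in>carrier G.
     \<alpha> (f x y) w = \<alpha> y w \<and> \<alpha> w (f x y) = \<alpha> w y)"

lemma twist_compatible_bilin:
  assumes \<alpha>: "\<alpha> \<in> bilin_maps G K"
    and closed: "\<And>u v. u \<in> carrier G \<Longrightarrow> v \<in> carrier G \<Longrightarrow> \<sigma> u v \<in> carrier G \<and> \<tau> v u \<in> carrier G"
    and "bilin_invariant \<sigma>" "bilin_invariant \<tau>"
  shows "twist_compatible \<sigma> \<tau> (\<lambda>u v. \<alpha> u v)" "twist_compatible \<sigma> \<tau> (\<lambda>u v. \<alpha> v u)"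
    and "twist_compatible \<sigma> \<tau> (\<lambda>u v. \<alpha> (inv u) v)" "twist_compatible \<sigma> \<tau> (\<lambda>u v. \<alpha> (inv v) u)"
    and "twist_compatible \<sigma> \<tau> (\<lambda>u v. \<alpha> v (inv u))"
proof -
  have "\<alpha> (\<sigma> u v) w = \<alpha> v w" "\<alpha> w (\<sigma> u v) = \<alpha> w v" "\<alpha> (\<tau> v u) w = \<alpha> u w" "\<alpha> w (\<tau> v u) = \<alpha> w u"
    if "u \<in> carrier G" "v \<in> carrier G" "w \<in> carrier G" for u v w
    using assms that by (simp_all add: bilin_invariant_def)
  note [simp] = this closed bilin_in_K[OF \<alpha>] bilin_mult_left[OF \<alpha>] bilin_mult_right[OF \<alpha>]
    bilin_K_left[OF \<alpha>] bilin_K_right[OF \<alpha>] bilin_inv_left[OF \<alpha>] bilin_inv_right[OF \<alpha>]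
  show "twist_compatible \<sigma> \<tau> (\<lambda>u v. \<alpha> u v)" "twist_compatible \<sigma> \<tau> (\<lambda>u v. \<alpha> v u)"
    and "twist_compatible \<sigma> \<tau> (\<lambda>u v. \<alpha> (inv u) v)" "twist_compatible \<sigma> \<tau> (\<lambda>u v. \<alpha> (inv v) u)"
    and "twist_compatible \<sigma> \<tau> (\<lambda>u v. \<alpha> v (inv u))"
    by (simp_all add: twist_compatible_def inv_mult_group)
qed

end

section \<open>Conjugation by a lift of an endomorphism of \<open>G/K\<close> with abelian image\<close>

locale abelian_lift = central_subgroup G K for G (structure) and K +
  fixes P :: "'a \<Rightarrow> 'a"
  assumes P_closed [simp]: "g \<in> carrier G \<Longrightarrow> P g \<in> carrier G"
    and P_mult_mod_K: "\<lbrakk>a \<in> carrier G; b \<in> carrier G\<rbrakk> \<Longrightarrow> inv (P a \<otimes> P b) \<otimes> P (a \<otimes> b) \<in> K"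
    and P_commute_mod_K: "\<lbrakk>a \<in> carrier G; b \<in> carrier G\<rbrakk> \<Longrightarrow> inv (P b \<otimes> P a) \<otimes> (P a \<otimes> P b) \<in> K"
    and P_K: "k \<in> K \<Longrightarrow> P k \<in> K"
begin

lemma conjugate_P_mult:
  "a \<in> carrier G \<Longrightarrow> b \<in> carrier G \<Longrightarrow> u \<in> carrier G \<Longrightarrow>
    conjugate (P (a \<otimes> b)) u = conjugate (P a) (conjugate (P b) u)"
  using conjugate_eq_mod_K[of "P (a \<otimes> b)" "P a \<otimes> P b" u] P_mult_mod_K[of a b]
  by (simp add: conjugate_conjugate)

lemma conjugate_P_commute:
  "a \<in> carrier G \<Longrightarrow> b \<in> carrier G \<Longrightarrow> u \<in> carrier G \<Longrightarrow>
    conjugate (P a) (conjugate (P b) u) = conjugate (P b) (conjugate (P a) u)"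
  using conjugate_eq_mod_K[of "P a \<otimes> P b" "P b \<otimes> P a" u] P_commute_mod_K[of a b]
  by (simp add: conjugate_conjugate)

lemma conjugate_P_K: "k \<in> K \<Longrightarrow> u \<in> carrier G \<Longrightarrow> conjugate (P k) u = u"
  using conjugate_eq_mod_K[of "P k" \<one> u] P_K by simp

lemma conjugate_P_inv:
  assumes "a \<in> carrier G" "u \<in> carrier G"
  shows "conjugate (P (inv a)) u = conjugate (inv (P a)) u"
proof -
  have "conjugate (P a) (conjugate (P (inv a)) u) = u"
    using assms conjugate_P_K[of \<one> u] by (simp flip: conjugate_P_mult)
  then show ?thesis
    using assms by (metis P_closed conjugate_closed conjugate_inv_conjugate inv_closed)
qed

lemma conjugate_inv_P_mult:
  "a \<in> carrier G \<Longrightarrow> b \<in> carrier G \<Longrightarrow> v \<in> carrier G \<Longrightarrow>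
    conjugate (inv (P (a \<otimes> b))) v = conjugate (inv (P b)) (conjugate (inv (P a)) v)"
  by (metis P_closed conjugate_P_inv conjugate_P_mult conjugate_closed inv_closed inv_mult_group m_closed)

lemma conjugate_inv_P_inv: "a \<in> carrier G \<Longrightarrow> v \<in> carrier G \<Longrightarrow> conjugate (inv (P (inv a))) v = conjugate (P a) v"
  by (metis conjugate_P_inv inv_closed inv_inv)

lemmas conjugate_P_simps = conjugate_P_mult conjugate_P_inv conjugate_inv_P_mult conjugate_inv_P_inv

lemma conjugate_P_conjugate:
  assumes "q \<in> carrier G" "u \<in> carrier G" "v \<in> carrier G"
  shows "conjugate (P (conjugate q u)) v = conjugate (P u) v"
proof -
  have "conjugate q u = q \<otimes> (u \<otimes> inv q)"
    using assms by (simp add: conjugate_def m_assoc)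
  then have "conjugate (P (conjugate q u)) v = conjugate (P q) (conjugate (P u) (conjugate (P (inv q)) v))"
    using assms by (simp add: conjugate_P_mult)
  also have "\<dots> = conjugate (P q) (conjugate (P (inv q)) (conjugate (P u) v))"
    using assms by (simp add: conjugate_P_commute)
  also have "\<dots> = conjugate (P u) v"
    using assms by (simp add: conjugate_P_inv)
  finally show ?thesis .
qed

lemma conjugate_P_pow_commute:
  assumes "a \<in> carrier G" "b \<in> carrier G" "u \<in> carrier G"
  shows "conjugate (P a [^] (i::int)) (conjugate (P b [^] (j::int)) u)
       = conjugate (P b [^] j) (conjugate (P a [^] i) u)"
proof -
  have "conjugations_commute (P a) (P b)"
    using assms by (simp add: conjugations_commute_def conjugate_P_commute)
  then have "conjugations_commute (P b) (P a [^] i)"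
    using assms by (simp add: conjugations_commute_int_pow conjugations_commute_sym)
  then have "conjugations_commute (P b [^] j) (P a [^] i)"
    using assms by (simp add: conjugations_commute_int_pow)
  with assms show ?thesis
    by (simp add: conjugations_commute_def)
qed

lemma conjugate_P_pow_add:
  "a \<in> carrier G \<Longrightarrow> u \<in> carrier G \<Longrightarrow>
    conjugate (P a [^] (i::int)) (conjugate (P a [^] (i'::int)) u) = conjugate (P a [^] (i + i')) u"
  by (simp add: conjugate_conjugate int_pow_mult)

text \<open>Every term occurring in the braid relations for \<open>x, y, z\<close> is built from \<open>x, y, z\<close> by
  products, inverses and conjugations by \<open>P\<close> of such terms.  Conjugation by \<open>P t\<close> only depends
  on \<open>t\<close> up to conjugation, so all these conjugations are words in the pairwise commuting
  conjugations by \<open>P x, P y, P z\<close>; \<open>conj_word\<close> records such a word by its exponents.\<close>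

definition conj_word :: "'a \<Rightarrow> 'a \<Rightarrow> 'a \<Rightarrow> int \<Rightarrow> int \<Rightarrow> int \<Rightarrow> 'a \<Rightarrow> 'a" where
  "conj_word a b c i j k u = conjugate (P a [^] i) (conjugate (P b [^] j) (conjugate (P c [^] k) u))"

context
  fixes a b c
  assumes abc: "a \<in> carrier G" "b \<in> carrier G" "c \<in> carrier G"
begin

lemma conj_word_closed [simp]: "u \<in> carrier G \<Longrightarrow> conj_word a b c i j k u \<in> carrier G"
  using abc by (simp add: conj_word_def)

lemma conj_word_mult [simp]:
  "u \<in> carrier G \<Longrightarrow> v \<in> carrier G \<Longrightarrow> conj_word a b c i j k (u \<otimes> v) = conj_word a b c i j k u \<otimes> conj_word a b c i j k v"
  using abc by (simp add: conj_word_def)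

lemma conj_word_inv [simp]: "u \<in> carrier G \<Longrightarrow> conj_word a b c i j k (inv u) = inv (conj_word a b c i j k u)"
  using abc by (simp add: conj_word_def)

lemma conj_word_zero [simp]: "u \<in> carrier G \<Longrightarrow> conj_word a b c 0 0 0 u = u"
  by (simp add: conj_word_def)

lemma conj_word_comp [simp]:
  assumes "u \<in> carrier G"
  shows "conj_word a b c i j k (conj_word a b c i' j' k' u) = conj_word a b c (i + i') (j + j') (k + k') u"
proof -
  note [simp] = abc assms
  have "conj_word a b c i j k (conj_word a b c i' j' k' u)
      = conjugate (P a [^] i) (conjugate (P b [^] j) (conjugate (P c [^] k)
          (conjugate (P a [^] i') (conjugate (P b [^] j') (conjugate (P c [^] k') u)))))"
    by (simp add: conj_word_def)
  also have "\<dots> = conjugate (P a [^] i) (conjugate (P a [^] i') (conjugate (P b [^] j)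
          (conjugate (P b [^] j') (conjugate (P c [^] k) (conjugate (P c [^] k') u)))))"
    by (simp add: conjugate_P_pow_commute[of c a] conjugate_P_pow_commute[of b a]
        conjugate_P_pow_commute[of c b])
  also have "\<dots> = conj_word a b c (i + i') (j + j') (k + k') u"
    by (simp add: conj_word_def conjugate_P_pow_add)
  finally show ?thesis .
qed

lemma conjugate_P_conj_word [simp]:
  "u \<in> carrier G \<Longrightarrow> v \<in> carrier G \<Longrightarrow> conjugate (P (conj_word a b c i j k u)) v = conjugate (P u) v"
  using abc by (simp add: conj_word_def conjugate_P_conjugate)

lemma conjugate_inv_P_conj_word [simp]:
  "u \<in> carrier G \<Longrightarrow> v \<in> carrier G \<Longrightarrow> conjugate (inv (P (conj_word a b c i j k u))) v = conjugate (inv (P u)) v"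
  by (metis conjugate_P_inv conjugate_P_conj_word conj_word_closed inv_closed conj_word_inv)

lemma conj_word_generators:
  "u \<in> carrier G \<Longrightarrow> conjugate (P a) u = conj_word a b c 1 0 0 u"
  "u \<in> carrier G \<Longrightarrow> conjugate (P b) u = conj_word a b c 0 1 0 u"
  "u \<in> carrier G \<Longrightarrow> conjugate (P c) u = conj_word a b c 0 0 1 u"
  "u \<in> carrier G \<Longrightarrow> conjugate (inv (P a)) u = conj_word a b c (- 1) 0 0 u"
  "u \<in> carrier G \<Longrightarrow> conjugate (inv (P b)) u = conj_word a b c 0 (- 1) 0 u"
  "u \<in> carrier G \<Longrightarrow> conjugate (inv (P c)) u = conj_word a b c 0 0 (- 1) u"
  using abc by (simp_all add: conj_word_def int_pow_neg)

end

lemmas conj_word_simps = conj_word_closed conj_word_mult conj_word_inv conj_word_zero conj_word_comp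
  conjugate_P_conj_word conjugate_inv_P_conj_word conj_word_generators

text \<open>The solutions \<open>r, r', r\<^sup>~, r\<^sup>~'\<close> before twisting by \<open>\<alpha>\<close>; \<open>rt\<close> stands for \<open>r\<^sup>~\<close>.
  As in \<open>r(g, h) = (\<sigma>\<^sub>g(h), \<tau>\<^sub>h(g))\<close>, the first argument of each \<open>tau\<close> map is the index \<open>h\<close>.\<close>

definition sigma_r :: "'a \<Rightarrow> 'a \<Rightarrow> 'a" where
  "sigma_r g h = P g \<otimes> h \<otimes> inv (P g)"

definition tau_r :: "'a \<Rightarrow> 'a \<Rightarrow> 'a" where
  "tau_r h g = inv (P h) \<otimes> P g \<otimes> inv h \<otimes> inv (P g) \<otimes> g \<otimes> P g \<otimes> h \<otimes> inv (P g) \<otimes> P h"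

definition sigma_r' :: "'a \<Rightarrow> 'a \<Rightarrow> 'a" where
  "sigma_r' g h = g \<otimes> P g \<otimes> h \<otimes> inv (P g) \<otimes> inv g"

definition tau_r' :: "'a \<Rightarrow> 'a \<Rightarrow> 'a" where
  "tau_r' h g = inv (P h) \<otimes> g \<otimes> P h"

definition sigma_rt :: "'a \<Rightarrow> 'a \<Rightarrow> 'a" where
  "sigma_rt g h = inv (P g) \<otimes> h \<otimes> P g"

definition tau_rt :: "'a \<Rightarrow> 'a \<Rightarrow> 'a" where
  "tau_rt h g = inv (P g) \<otimes> inv h \<otimes> P g \<otimes> g \<otimes> h"

definition sigma_rt' :: "'a \<Rightarrow> 'a \<Rightarrow> 'a" where
  "sigma_rt' g h = g \<otimes> h \<otimes> P h \<otimes> inv g \<otimes> inv (P h)"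

definition tau_rt' :: "'a \<Rightarrow> 'a \<Rightarrow> 'a" where
  "tau_rt' h g = P h \<otimes> g \<otimes> inv (P h)"

lemmas solution_maps_defs = sigma_r_def tau_r_def sigma_r'_def tau_r'_def
  sigma_rt_def tau_rt_def sigma_rt'_def tau_rt'_def

lemma solution_maps_closed [simp]:
  assumes "g \<in> carrier G" "h \<in> carrier G"
  shows "sigma_r g h \<in> carrier G" "tau_r h g \<in> carrier G" "sigma_r' g h \<in> carrier G" "tau_r' h g \<in> carrier G"
    and "sigma_rt g h \<in> carrier G" "tau_rt h g \<in> carrier G" "sigma_rt' g h \<in> carrier G" "tau_rt' h g \<in> carrier G"
  using assms by (simp_all add: solution_maps_defs)

lemma solution_maps_conjugate:
  assumes "g \<in> carrier G" "h \<in> carrier G"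
  shows "sigma_r g h = conjugate (P g) h"
    and "tau_r h g = conjugate (inv (P h)) (inv (conjugate (P g) h) \<otimes> g \<otimes> conjugate (P g) h)"
    and "sigma_r' g h = g \<otimes> conjugate (P g) h \<otimes> inv g"
    and "tau_r' h g = conjugate (inv (P h)) g"
    and "sigma_rt g h = conjugate (inv (P g)) h"
    and "tau_rt h g = inv (conjugate (inv (P g)) h) \<otimes> g \<otimes> h"
    and "sigma_rt' g h = g \<otimes> h \<otimes> inv (conjugate (P h) g)"
    and "tau_rt' h g = conjugate (P h) g"
  using assms by (simp_all add: solution_maps_defs conjugate_def m_assoc inv_mult_group)

lemmas solution_maps_simps = solution_maps_conjugate conjugate_P_simps m_assoc inv_mult_group

lemma braid_relations_r: "braid_relations (carrier G) sigma_r tau_r"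
  apply (rule braid_relationsI)
  subgoal for x y z by (simp add: solution_maps_simps conj_word_simps[of x y z])
  done

lemma braid_relations_r': "braid_relations (carrier G) sigma_r' tau_r'"
  apply (rule braid_relationsI)
  subgoal for x y z by (simp add: solution_maps_simps conj_word_simps[of x y z])
  done

lemma braid_relations_rt: "braid_relations (carrier G) sigma_rt tau_rt"
  apply (rule braid_relationsI)
  subgoal for x y z by (simp add: solution_maps_simps conj_word_simps[of x y z])
  done

lemma braid_relations_rt': "braid_relations (carrier G) sigma_rt' tau_rt'"
  apply (rule braid_relationsI)
  subgoal for x y z by (simp add: solution_maps_simps conj_word_simps[of x y z])
  done

lemma r_r'_inverse:
  assumes "x \<in> carrier G" "y \<in> carrier G"
  shows "sigma_r' (sigma_r x y) (tau_r y x) = x \<and> tau_r' (tau_r y x) (sigma_r x y) = y"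
    and "sigma_r (sigma_r' x y) (tau_r' y x) = x \<and> tau_r (tau_r' y x) (sigma_r' x y) = y"
  using assms by (simp_all add: solution_maps_simps conj_word_simps[of x y \<one>])

lemma rt_rt'_inverse:
  assumes "x \<in> carrier G" "y \<in> carrier G"
  shows "sigma_rt' (sigma_rt x y) (tau_rt y x) = x \<and> tau_rt' (tau_rt y x) (sigma_rt x y) = y"
    and "sigma_rt (sigma_rt' x y) (tau_rt' y x) = x \<and> tau_rt (tau_rt' y x) (sigma_rt' x y) = y"
  using assms by (simp_all add: solution_maps_simps conj_word_simps[of x y \<one>])

lemma bij_betw_r: "bij_betw (\<lambda>(x, y). (sigma_r x y, tau_r y x)) (carrier G \<times> carrier G) (carrier G \<times> carrier G)"
  by (rule bij_betw_of_inverse_pair_maps[where \<sigma>'=sigma_r' and \<tau>'=tau_r']) (simp_all add: r_r'_inverse)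

lemma bij_betw_r': "bij_betw (\<lambda>(x, y). (sigma_r' x y, tau_r' y x)) (carrier G \<times> carrier G) (carrier G \<times> carrier G)"
  by (rule bij_betw_of_inverse_pair_maps[where \<sigma>'=sigma_r and \<tau>'=tau_r]) (simp_all add: r_r'_inverse)

lemma bij_betw_rt: "bij_betw (\<lambda>(x, y). (sigma_rt x y, tau_rt y x)) (carrier G \<times> carrier G) (carrier G \<times> carrier G)"
  by (rule bij_betw_of_inverse_pair_maps[where \<sigma>'=sigma_rt' and \<tau>'=tau_rt']) (simp_all add: rt_rt'_inverse)

lemma bij_betw_rt': "bij_betw (\<lambda>(x, y). (sigma_rt' x y, tau_rt' y x)) (carrier G \<times> carrier G) (carrier G \<times> carrier G)"
  by (rule bij_betw_of_inverse_pair_maps[where \<sigma>'=sigma_rt and \<tau>'=tau_rt]) (simp_all add: rt_rt'_inverse)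

lemma sigma_r'_eq_conjugate: "g \<in> carrier G \<Longrightarrow> h \<in> carrier G \<Longrightarrow> sigma_r' g h = conjugate (g \<otimes> P g) h"
  by (simp add: sigma_r'_def conjugate_def m_assoc inv_mult_group)

lemma tau_r_inverse:
  assumes "h \<in> carrier G" "g \<in> carrier G"
  shows "tau_r h (conjugate (P g) h \<otimes> conjugate (P h) g \<otimes> inv (conjugate (P g) h)) = g"
    and "conjugate (P (tau_r h g)) h \<otimes> conjugate (P h) (tau_r h g) \<otimes> inv (conjugate (P (tau_r h g)) h) = g"
  using assms by (simp_all add: solution_maps_simps conj_word_simps[of h g \<one>])

lemma tau_rt_inverse:
  assumes "h \<in> carrier G" "g \<in> carrier G"
  shows "tau_rt h (conjugate (inv (P g)) h \<otimes> g \<otimes> inv h) = g"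
    and "conjugate (inv (P (tau_rt h g))) h \<otimes> tau_rt h g \<otimes> inv h = g"
  using assms by (simp_all add: solution_maps_simps conj_word_simps[of h g \<one>])

lemma sigma_rt'_inverse:
  assumes "g \<in> carrier G" "h \<in> carrier G"
  shows "sigma_rt' g (inv g \<otimes> h \<otimes> conjugate (P h) g) = h"
    and "inv g \<otimes> sigma_rt' g h \<otimes> conjugate (P (sigma_rt' g h)) g = h"
  using assms by (simp_all add: solution_maps_simps conj_word_simps[of g h \<one>])

lemma nondegenerate_r: "nondegenerate (carrier G) (\<lambda>(x, y). (sigma_r x y, tau_r y x))"
  unfolding nondegenerate_iff_bij_betw
proof (intro conjI ballI)
  show "bij_betw (sigma_r x) (carrier G) (carrier G)" if "x \<in> carrier G" for x
    using that by (intro bij_betw_conjugate_cong) (simp_all add: solution_maps_conjugate)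
  show "bij_betw (tau_r y) (carrier G) (carrier G)" if "y \<in> carrier G" for y
    by (rule bij_betw_byWitness[where f'="\<lambda>t. conjugate (P t) y \<otimes> conjugate (P y) t \<otimes> inv (conjugate (P t) y)"])
      (use that in \<open>auto simp: tau_r_inverse\<close>)
qed

lemma nondegenerate_r': "nondegenerate (carrier G) (\<lambda>(x, y). (sigma_r' x y, tau_r' y x))"
  unfolding nondegenerate_iff_bij_betw
proof (intro conjI ballI)
  show "bij_betw (sigma_r' x) (carrier G) (carrier G)" if "x \<in> carrier G" for x
    using that by (intro bij_betw_conjugate_cong[of "x \<otimes> P x"]) (simp_all add: sigma_r'_eq_conjugate)
  show "bij_betw (tau_r' y) (carrier G) (carrier G)" if "y \<in> carrier G" for y
    using that by (intro bij_betw_conjugate_cong) (simp_all add: solution_maps_conjugate)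
qed

lemma nondegenerate_rt: "nondegenerate (carrier G) (\<lambda>(x, y). (sigma_rt x y, tau_rt y x))"
  unfolding nondegenerate_iff_bij_betw
proof (intro conjI ballI)
  show "bij_betw (sigma_rt x) (carrier G) (carrier G)" if "x \<in> carrier G" for x
    using that by (intro bij_betw_conjugate_cong) (simp_all add: solution_maps_conjugate)
  show "bij_betw (tau_rt y) (carrier G) (carrier G)" if "y \<in> carrier G" for y
    by (rule bij_betw_byWitness[where f'="\<lambda>t. conjugate (inv (P t)) y \<otimes> t \<otimes> inv y"])
      (use that in \<open>auto simp: tau_rt_inverse\<close>)
qed

lemma nondegenerate_rt': "nondegenerate (carrier G) (\<lambda>(x, y). (sigma_rt' x y, tau_rt' y x))"
  unfolding nondegenerate_iff_bij_betw
proof (intro conjI ballI)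
  show "bij_betw (sigma_rt' x) (carrier G) (carrier G)" if "x \<in> carrier G" for x
    by (rule bij_betw_byWitness[where f'="\<lambda>t. inv x \<otimes> t \<otimes> conjugate (P t) x"])
      (use that in \<open>auto simp: sigma_rt'_inverse\<close>)
  show "bij_betw (tau_rt' y) (carrier G) (carrier G)" if "y \<in> carrier G" for y
    using that by (intro bij_betw_conjugate_cong) (simp_all add: solution_maps_conjugate)
qed

lemma nondeg_YBE_solution_r: "nondeg_YBE_solution (carrier G) (\<lambda>(x, y). (sigma_r x y, tau_r y x))"
  by (simp add: nondeg_YBE_solution_def YBE_solution_iff_braid_relations carrier_not_empty
      bij_betw_r braid_relations_r nondegenerate_r)

lemma nondeg_YBE_solution_r': "nondeg_YBE_solution (carrier G) (\<lambda>(x, y). (sigma_r' x y, tau_r' y x))"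
  by (simp add: nondeg_YBE_solution_def YBE_solution_iff_braid_relations carrier_not_empty
      bij_betw_r' braid_relations_r' nondegenerate_r')

lemma nondeg_YBE_solution_rt: "nondeg_YBE_solution (carrier G) (\<lambda>(x, y). (sigma_rt x y, tau_rt y x))"
  by (simp add: nondeg_YBE_solution_def YBE_solution_iff_braid_relations carrier_not_empty
      bij_betw_rt braid_relations_rt nondegenerate_rt)

lemma nondeg_YBE_solution_rt': "nondeg_YBE_solution (carrier G) (\<lambda>(x, y). (sigma_rt' x y, tau_rt' y x))"
  by (simp add: nondeg_YBE_solution_def YBE_solution_iff_braid_relations carrier_not_empty
      bij_betw_rt' braid_relations_rt' nondegenerate_rt')

text \<open>\<open>right_mult k u = u \<otimes> k\<close> for central \<open>k\<close>, kept folded so that the simplifier moves \<open>k\<close>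
  to the outside of a term instead of reassociating it.\<close>

definition right_mult :: "'a \<Rightarrow> 'a \<Rightarrow> 'a" where
  "right_mult k u = u \<otimes> k"

context
  fixes k
  assumes k: "k \<in> K"
begin

lemma right_mult_closed [simp]: "u \<in> carrier G \<Longrightarrow> right_mult k u \<in> carrier G"
  using k by (simp add: right_mult_def)

lemma right_mult_mult_left [simp]:
  "a \<in> carrier G \<Longrightarrow> b \<in> carrier G \<Longrightarrow> right_mult k a \<otimes> b = right_mult k (a \<otimes> b)"
  using k K_central[OF k, of b] by (simp add: right_mult_def m_assoc)

lemma right_mult_mult_right [simp]:
  "a \<in> carrier G \<Longrightarrow> b \<in> carrier G \<Longrightarrow> a \<otimes> right_mult k b = right_mult k (a \<otimes> b)"
  using k by (simp add: right_mult_def m_assoc)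

lemma inv_right_mult [simp]: "a \<in> carrier G \<Longrightarrow> inv (right_mult k a) = right_mult (inv k) (inv a)"
  using k K_central[of "inv k" "inv a"] by (simp add: right_mult_def inv_mult_group)

lemma conjugate_right_mult [simp]:
  "p \<in> carrier G \<Longrightarrow> a \<in> carrier G \<Longrightarrow> conjugate p (right_mult k a) = right_mult k (conjugate p a)"
  using k by (simp add: right_mult_def conjugate_K)

lemma conjugate_P_right_mult [simp]:
  "a \<in> carrier G \<Longrightarrow> v \<in> carrier G \<Longrightarrow> conjugate (P (right_mult k a)) v = conjugate (P a) v"
  using k by (simp add: right_mult_def conjugate_P_mult conjugate_P_K)

lemma conjugate_inv_P_right_mult [simp]:
  assumes "a \<in> carrier G" "v \<in> carrier G"
  shows "conjugate (inv (P (right_mult k a))) v = conjugate (inv (P a)) v"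
proof -
  have "conjugate (inv (P (right_mult k a))) v = conjugate (inv (P k)) (conjugate (inv (P a)) v)"
    using assms k by (simp add: right_mult_def conjugate_inv_P_mult)
  also have "\<dots> = conjugate (P (inv k)) (conjugate (inv (P a)) v)"
    using assms k by (simp add: conjugate_P_inv)
  also have "\<dots> = conjugate (inv (P a)) v"
    using assms k by (simp add: conjugate_P_K)
  finally show ?thesis .
qed

end

lemma right_mult_right_mult [simp]:
  "k \<in> K \<Longrightarrow> k' \<in> K \<Longrightarrow> a \<in> carrier G \<Longrightarrow> right_mult k (right_mult k' a) = right_mult (k' \<otimes> k) a"
  by (simp add: right_mult_def m_assoc)

lemma right_mult_one [simp]: "a \<in> carrier G \<Longrightarrow> right_mult \<one> a = a"
  by (simp add: right_mult_def)

lemma K_equivariant_right_multI: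
  assumes "\<And>u v k. u \<in> carrier G \<Longrightarrow> v \<in> carrier G \<Longrightarrow> k \<in> K \<Longrightarrow>
      \<sigma> (right_mult k u) v = \<sigma> u v \<and> \<sigma> u (right_mult k v) = right_mult k (\<sigma> u v) \<and>
      \<tau> (right_mult k v) u = \<tau> v u \<and> \<tau> v (right_mult k u) = right_mult k (\<tau> v u)"
  shows "K_equivariant \<sigma> \<tau>"
  using assms by (simp add: K_equivariant_def right_mult_def)

lemma K_equivariant_r: "K_equivariant sigma_r tau_r"
  by (rule K_equivariant_right_multI) (simp add: solution_maps_simps)

lemma K_equivariant_r': "K_equivariant sigma_r' tau_r'"
  by (rule K_equivariant_right_multI) (simp add: solution_maps_simps)

lemma K_equivariant_rt: "K_equivariant sigma_rt tau_rt"
  by (rule K_equivariant_right_multI) (simp add: solution_maps_simps)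

lemma K_equivariant_rt': "K_equivariant sigma_rt' tau_rt'"
  by (rule K_equivariant_right_multI) (simp add: solution_maps_simps)

lemma bilin_invariant_solution_maps:
  "bilin_invariant sigma_r" "bilin_invariant tau_r" "bilin_invariant sigma_r'" "bilin_invariant tau_r'"
  "bilin_invariant sigma_rt" "bilin_invariant tau_rt" "bilin_invariant sigma_rt'" "bilin_invariant tau_rt'"
  unfolding bilin_invariant_def
  by (auto simp: solution_maps_conjugate m_assoc inv_mult_group K_mult_comm K_mult_left_comm
      K_conjugate_cancel)

theorem nondeg_YBE_solutions_twisted:
  assumes \<alpha>: "\<alpha> \<in> bilin_maps G K"
  shows
   "nondeg_YBE_solution (carrier G) (\<lambda>(g, h).
      (P g \<otimes> h \<otimes> inv (P g) \<otimes> \<alpha> g h,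
       inv (P h) \<otimes> P g \<otimes> inv h \<otimes> inv (P g) \<otimes> g \<otimes> P g \<otimes> h \<otimes> inv (P g)
         \<otimes> P h \<otimes> \<alpha> (inv h) g))
  \<and> nondeg_YBE_solution (carrier G) (\<lambda>(g, h).
      (g \<otimes> P g \<otimes> h \<otimes> inv (P g) \<otimes> inv g \<otimes> \<alpha> g h,
       inv (P h) \<otimes> g \<otimes> P h \<otimes> \<alpha> (inv h) g))
  \<and> nondeg_YBE_solution (carrier G) (\<lambda>(g, h).
      (inv (P g) \<otimes> h \<otimes> P g \<otimes> \<alpha> (inv g) h,
       inv (P g) \<otimes> inv h \<otimes> P g \<otimes> g \<otimes> h \<otimes> \<alpha> g h))
  \<and> nondeg_YBE_solution (carrier G) (\<lambda>(g, h).
      (g \<otimes> h \<otimes> P h \<otimes> inv g \<otimes> inv (P h) \<otimes> \<alpha> h (inv g),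
       P h \<otimes> g \<otimes> inv (P h) \<otimes> \<alpha> h g))"
proof -
  note compatible = twist_compatible_bilin[OF \<alpha>]
  note invariant = bilin_invariant_solution_maps
  have "nondeg_YBE_solution (carrier G) (\<lambda>(g, h). (sigma_r g h \<otimes> \<alpha> g h, tau_r h g \<otimes> \<alpha> (inv h) g))"
    using nondeg_YBE_solution_twist[OF nondeg_YBE_solution_r K_equivariant_r
        compatible(1,4)[OF _ invariant(1,2)]] by simp
  moreover have "nondeg_YBE_solution (carrier G) (\<lambda>(g, h). (sigma_r' g h \<otimes> \<alpha> g h, tau_r' h g \<otimes> \<alpha> (inv h) g))"
    using nondeg_YBE_solution_twist[OF nondeg_YBE_solution_r' K_equivariant_r'
        compatible(1,4)[OF _ invariant(3,4)]] by simp
  moreover have "nondeg_YBE_solution (carrier G) (\<lambda>(g, h). (sigma_rt g h \<otimes> \<alpha> (inv g) h, tau_rt h g \<otimes> \<alpha> g h))"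
    using nondeg_YBE_solution_twist[OF nondeg_YBE_solution_rt K_equivariant_rt
        compatible(3,1)[OF _ invariant(5,6)]] by simp
  moreover have "nondeg_YBE_solution (carrier G) (\<lambda>(g, h). (sigma_rt' g h \<otimes> \<alpha> h (inv g), tau_rt' h g \<otimes> \<alpha> h g))"
    using nondeg_YBE_solution_twist[OF nondeg_YBE_solution_rt' K_equivariant_rt'
        compatible(5,2)[OF _ invariant(7,8)]] by simp
  ultimately show ?thesis
    by (simp only: solution_maps_defs)
qed

end

section \<open>Liftings of endomorphisms of \<open>G/K\<close> into \<open>A/K\<close>\<close>

lemma central_subgroupI:
  assumes "group G" "subgroup K G" "K \<subseteq> group_centre G"
  shows "central_subgroup G K"
  using assms by (intro central_subgroup.intro central_subgroup_axioms.intro) (auto simp: group_centre_def)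

context central_subgroup
begin

lemma normal_K: "K \<lhd> G"
proof (rule normalI[OF subgroup_K], intro ballI)
  fix x assume x: "x \<in> carrier G"
  show "K #> x = x <# K"
    unfolding r_coset_def l_coset_def by (rule SUP_cong) (simp_all add: K_central[OF _ x])
qed

lemma inv_mult_in_K_of_rcos_eq:
  assumes "x \<in> carrier G" "y \<in> carrier G" "K #> x = K #> y"
  shows "inv y \<otimes> x \<in> K"
proof -
  have k: "x \<otimes> inv y \<in> K"
    using assms rcos_self[OF assms(1) subgroup_K] subgroup.rcos_module_imp[OF subgroup_K is_group]
    by simp
  have "inv y \<otimes> x = inv y \<otimes> (x \<otimes> inv y \<otimes> y)"
    using assms by (simp add: m_assoc)
  also have "\<dots> = inv y \<otimes> (y \<otimes> (x \<otimes> inv y))"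
    using assms k K_central[of "x \<otimes> inv y" y] by simp
  also have "\<dots> = x \<otimes> inv y"
    using assms by simp
  finally show ?thesis
    using k by simp
qed

context
  fixes A :: "'a set" and \<psi> :: "'a set \<Rightarrow> 'a set" and \<psi>u :: "'a \<Rightarrow> 'a"
  assumes A: "subgroup A G"
    and \<psi>: "\<psi> \<in> endo_into G K A"
    and lift: "is_lifting G K A \<psi> \<psi>u"
begin

lemma lifting_closed: "g \<in> carrier G \<Longrightarrow> \<psi>u g \<in> carrier G"
  using lift subgroup.subset[OF A] by (auto simp: is_lifting_def)

lemma rcos_lifting: "g \<in> carrier G \<Longrightarrow> K #> \<psi>u g = \<psi> (K #> g)"
  using lift by (simp add: is_lifting_def)

lemma lifting_mult_mod_K:
  assumes a: "a \<in> carrier G" and b: "b \<in> carrier G"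
  shows "inv (\<psi>u a \<otimes> \<psi>u b) \<otimes> \<psi>u (a \<otimes> b) \<in> K"
proof -
  interpret K: normal K G by (rule normal_K)
  have hom: "\<psi> \<in> hom (G Mod K) (G Mod K)"
    using \<psi> by (simp add: endo_into_def)
  have coset: "K #> g \<in> carrier (G Mod K)" if "g \<in> carrier G" for g
    using that subgroup.subset[OF subgroup_K] by (simp add: FactGroup_def rcosetsI)
  have "K #> \<psi>u (a \<otimes> b) = \<psi> ((K #> a) <#> (K #> b))"
    using a b by (simp add: rcos_lifting K.rcos_sum)
  also have "\<dots> = \<psi> (K #> a) <#> \<psi> (K #> b)"
    using hom_mult[OF hom coset[OF a] coset[OF b]] by (simp add: FactGroup_def)
  also have "\<dots> = K #> (\<psi>u a \<otimes> \<psi>u b)"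
    using a b by (simp add: lifting_closed K.rcos_sum flip: rcos_lifting)
  finally show ?thesis
    using a b by (simp add: lifting_closed inv_mult_in_K_of_rcos_eq)
qed

lemma lifting_commute_mod_K:
  assumes abelian: "comm_group ((G\<lparr>carrier := A\<rparr>) Mod K)"
    and a: "a \<in> carrier G" and b: "b \<in> carrier G"
  shows "inv (\<psi>u b \<otimes> \<psi>u a) \<otimes> (\<psi>u a \<otimes> \<psi>u b) \<in> K"
proof -
  interpret K: normal K G by (rule normal_K)
  have coset: "K #> \<psi>u g \<in> carrier ((G\<lparr>carrier := A\<rparr>) Mod K)" if "g \<in> carrier G" for g
    using that lift by (auto simp: is_lifting_def FactGroup_def RCOSETS_def r_coset_def)
  have "(K #> \<psi>u a) <#> (K #> \<psi>u b) = (K #> \<psi>u b) <#> (K #> \<psi>u a)"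
    using comm_groupE(4)[OF abelian coset[OF a] coset[OF b]] by (simp add: FactGroup_def set_mult_def)
  then have "K #> (\<psi>u a \<otimes> \<psi>u b) = K #> (\<psi>u b \<otimes> \<psi>u a)"
    using a b by (simp add: lifting_closed K.rcos_sum)
  then show ?thesis
    using a b by (simp add: lifting_closed inv_mult_in_K_of_rcos_eq)
qed

lemma lifting_K:
  assumes k: "k \<in> K"
  shows "\<psi>u k \<in> K"
proof -
  interpret K: normal K G by (rule normal_K)
  have "group_hom (G Mod K) (G Mod K) \<psi>"
    using \<psi> K.factorgroup_is_group by (simp add: endo_into_def group_hom_def group_hom_axioms_def)
  then have "\<psi> K = K"
    using group_hom.hom_one[of "G Mod K" "G Mod K" \<psi>] by (simp add: FactGroup_def)
  then have "K #> \<psi>u k = K"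
    using k coset_join2[OF K_carrier[OF k] subgroup_K k] by (simp add: rcos_lifting)
  then show ?thesis
    using rcos_self[OF lifting_closed[OF K_carrier[OF k]] subgroup_K] by simp
qed

lemma abelian_lift_of_lifting:
  assumes "comm_group ((G\<lparr>carrier := A\<rparr>) Mod K)"
  shows "abelian_lift G K \<psi>u"
  by unfold_locales
    (simp_all add: lifting_closed lifting_mult_mod_K lifting_commute_mod_K[OF assms] lifting_K)

end

end

theorem mainTheorem15:
  fixes G (structure)
    and K A :: "'a set"
    and \<psi> :: "'a set \<Rightarrow> 'a set"
    and \<psi>u :: "'a \<Rightarrow> 'a"
    and \<alpha> :: "'a \<Rightarrow> 'a \<Rightarrow> 'a"
  assumes grp: "group G"
    and K_sub: "subgroup K G"
    and K_centre: "K \<subseteq> group_centre G"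
    and A_sub: "subgroup A G"
    and KA: "K \<subseteq> A"
    and A_mod_K_abelian: "comm_group ((G\<lparr>carrier := A\<rparr>) Mod K)"
    and psi: "\<psi> \<in> endo_into G K A"
    and lift: "is_lifting G K A \<psi> \<psi>u"
    and alpha: "\<alpha> \<in> bilin_maps G K"
  shows
   "nondeg_YBE_solution (carrier G) (\<lambda>(g, h).
      (\<psi>u g \<otimes> h \<otimes> inv (\<psi>u g) \<otimes> \<alpha> g h,
       inv (\<psi>u h) \<otimes> \<psi>u g \<otimes> inv h \<otimes> inv (\<psi>u g) \<otimes> g \<otimes> \<psi>u g \<otimes> h \<otimes> inv (\<psi>u g)
         \<otimes> \<psi>u h \<otimes> \<alpha> (inv h) g))
  \<and> nondeg_YBE_solution (carrier G) (\<lambda>(g, h).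
      (g \<otimes> \<psi>u g \<otimes> h \<otimes> inv (\<psi>u g) \<otimes> inv g \<otimes> \<alpha> g h,
       inv (\<psi>u h) \<otimes> g \<otimes> \<psi>u h \<otimes> \<alpha> (inv h) g))
  \<and> nondeg_YBE_solution (carrier G) (\<lambda>(g, h).
      (inv (\<psi>u g) \<otimes> h \<otimes> \<psi>u g \<otimes> \<alpha> (inv g) h,
       inv (\<psi>u g) \<otimes> inv h \<otimes> \<psi>u g \<otimes> g \<otimes> h \<otimes> \<alpha> g h))
  \<and> nondeg_YBE_solution (carrier G) (\<lambda>(g, h).
      (g \<otimes> h \<otimes> \<psi>u h \<otimes> inv g \<otimes> inv (\<psi>u h) \<otimes> \<alpha> h (inv g),
       \<psi>u h \<otimes> g \<otimes> inv (\<psi>u h) \<otimes> \<alpha> h g))"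
proof -
  interpret central_subgroup G K
    using grp K_sub K_centre by (rule central_subgroupI)
  interpret abelian_lift G K \<psi>u
    using A_sub psi lift A_mod_K_abelian by (rule abelian_lift_of_lifting)
  show ?thesis
    using alpha by (rule nondeg_YBE_solutions_twisted)
qed

end
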